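(* Let $G=(V,E)$ be a bipartite graph with probabilities $p_e\in(0,1]$, and let $x$ be a feasible solution of (LP-BIP). Let $\hat E\subseteq E$ be a random set, and write $\hat x_e=\mathbf 1[e\in\hat E]$. Assume $\hat E$ satisfies: - (marginals) $\Pr[\hat x_e=1]=x_e$ for every $e\in E$; - (negative correlation) for every $v\in V$, every $S\subseteq\delta(v)$ and every $b\in\{0,1\}$, $\Pr[\bigwedge_{e\in S}\hat x_e=b]\le\prod_{e\in S}\Pr[\hat x_e=b]$. Independently of $\hat E$, draw independent random variables $Y_e$ for $e\in E$, where $Y_e$ takes values in $[0,\frac{1}{p_e}\ln\frac1{1-p_e}]$ and $\Pr[Y_e\le y]=\frac{1}{p_e}(1-e^{-p_e y})$ on that interval (for $p_e=1$ the interval is $[0,\infty)$). Run the following process: - consider the edges of $\hat E$ in increasing order of $Y_e$; - when edge $e$ is considered, probe it if no edge of $\hat\delta(e):=\delta(e)\cap\hat E$ has already been added to the matching; - a probed edge exists independently with probability $p_e$, and if it exists it is added to the matching. Call $e\in\hat E$ safe if, at the moment $e$ is considered, no edge of $\hat\delta(e)$ is in the matching. Then for every edge $e$, $$\Pr[e\text{ is safe}\mid e\in\hat E]\ \ge\ g(p_e),$$ where $g$ is the function defined in the context below.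
   Context: (LP-BIP) is the linear program in variables $x_e$, $e\in E$: maximize $\sum_{e\in E}w_ep_ex_e$ subject to - $\sum_{e\in\delta(v)}p_ex_e\le 1$ for all $v\in V$; - $\sum_{e\in\delta(v)}x_e\le t_v$ for all $v\in V$; - $0\le x_e\le 1$ for all $e\in E$. Here $\delta(v)$ is the set of edges incident to $v$, and for an edge $e$, $\delta(e)$ is the set of edges other than $e$ sharing an endpoint with $e$. The function $g$ is defined by $g(p)=\frac{1}{2+p}\bigl(1-\exp(-\frac{2+p}{p}\ln\frac{1}{1-p})\bigr)$ for $p\in(0,1)$, and $g(1)=\frac13$ (the limit as $p\to1$). *)

theory Defs
  imports "HOL-Probability.Probability"
begin

definition delta_v :: "'v set set \<Rightarrow> 'v \<Rightarrow> 'v set set" where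
  "delta_v E v = {e \<in> E. v \<in> e}"

definition delta_e :: "'v set set \<Rightarrow> 'v set \<Rightarrow> 'v set set" where
  "delta_e E e = {f \<in> E. f \<noteq> e \<and> f \<inter> e \<noteq> {}}"

definition bipartite_graph :: "'v set \<Rightarrow> 'v set set \<Rightarrow> bool" where
  "bipartite_graph V E \<longleftrightarrow> finite V \<and> (\<forall>e\<in>E. e \<subseteq> V \<and> card e = 2) \<and>
     (\<exists>L. L \<subseteq> V \<and> (\<forall>e\<in>E. card (e \<inter> L) = 1))"

definition lp_bip_feasible ::
  "'v set \<Rightarrow> 'v set set \<Rightarrow> ('v set \<Rightarrow> real) \<Rightarrow> ('v \<Rightarrow> nat) \<Rightarrow> ('v set \<Rightarrow> real) \<Rightarrow> bool" where
  "lp_bip_feasible V E p t x \<longleftrightarrow>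
     (\<forall>v\<in>V. (\<Sum>e\<in>delta_v E v. p e * x e) \<le> 1) \<and>
     (\<forall>v\<in>V. (\<Sum>e\<in>delta_v E v. x e) \<le> real (t v)) \<and>
     (\<forall>e\<in>E. 0 \<le> x e \<and> x e \<le> 1)"

definition g :: "real \<Rightarrow> real" where
  "g p = (if p = 1 then 1/3
          else (1 / (2 + p)) * (1 - exp (- ((2 + p) / p) * ln (1 / (1 - p)))))"

text \<open>Order in which the edges of the random set are considered: increasing Y,
  ties broken by an (arbitrary, injective) rank r.\<close>
definition consider_order :: "'e set \<Rightarrow> ('e \<Rightarrow> real) \<Rightarrow> ('e \<Rightarrow> nat) \<Rightarrow> 'e list" where
  "consider_order A Y r = (THE xs. set xs = A \<and>
      sorted_wrt (\<lambda>e f. Y e < Y f \<or> (Y e = Y f \<and> r e < r f)) xs)"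

fun run_process :: "'v set set \<Rightarrow> ('v set \<Rightarrow> bool) \<Rightarrow> 'v set list \<Rightarrow> 'v set set \<Rightarrow> 'v set set" where
  "run_process E X [] Mt = Mt"
| "run_process E X (e # es) Mt =
     run_process E X es
       (if (\<exists>f\<in>Mt. f \<in> delta_e E e) then Mt else if X e then insert e Mt else Mt)"

definition safe :: "'v set set \<Rightarrow> 'v set set \<Rightarrow> ('v set \<Rightarrow> real) \<Rightarrow> ('v set \<Rightarrow> nat)
     \<Rightarrow> ('v set \<Rightarrow> bool) \<Rightarrow> 'v set \<Rightarrow> bool" where
  "safe E Eh Y r X e \<longleftrightarrow> e \<in> Eh \<and>
     (let xs = consider_order Eh Y r;
          Mt = run_process E X (takeWhile (\<lambda>f. f \<noteq> e) xs) {}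
      in \<not> (\<exists>f\<in>Mt. f \<in> delta_e E e \<inter> Eh))"

datatype 'e source = SrcE | SrcY 'e | SrcX 'e

end

theory Submission
  imports Defs
begin

(* Say that e beats its rivals if e \<in> Ehat and Y e < Y f for every f \<in> \<delta>(e) \<inter> Ehat that exists (X f).
  Then e is safe: only existing edges considered before e can be in the matching.
  Given Ehat = B, the time Y e is independent of the first time R_B at which an existing
  edge of \<delta>(e) \<inter> B is considered, and Pr[s < R_B] \<ge> exp (- s \<sigma>_B) with
  \<sigma>_B = \<Sum>f\<in>\<delta>(e)\<inter>B. p f, because Pr[X f \<and> Y f \<le> s] \<le> 1 - exp (- p f s).
  The tangent line of exp (- T \<sigma>) at \<sigma> = 2 gives exp (- T \<sigma>) \<ge> exp (-2 T) (1 + (2 - \<sigma>) T),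
  and negative correlation together with the LP constraints at both endpoints of e gives
  E[\<sigma>_Ehat ; e \<in> Ehat] \<le> 2 x e.  Hence Pr[e beats its rivals] \<ge> x e E[exp (-2 Y e)], and integrating
  against the distribution of Y e yields E[exp (-2 Y e)] = g (p e). *)

section \<open>The order of consideration and the process\<close>

lemma sorted_wrt_unique:
  assumes irrefl: "\<And>a. \<not> R a a" and asym: "\<And>a b. R a b \<Longrightarrow> \<not> R b a"
  shows "sorted_wrt R xs \<Longrightarrow> sorted_wrt R ys \<Longrightarrow> set xs = set ys \<Longrightarrow> xs = ys"
proof (induction xs arbitrary: ys)
  case Nil then show ?case by simp
next
  case (Cons a xs)
  then obtain b ys' where ys: "ys = b # ys'" by (cases ys) auto
  have "a = b"
  proof (rule ccontr)
    assume "a \<noteq> b"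
    then have "a \<in> set ys'" "b \<in> set xs" using Cons.prems ys by auto
    then have "R b a" "R a b" using Cons.prems ys by auto
    then show False using asym by blast
  qed
  have "a \<notin> set xs" "b \<notin> set ys'" using Cons.prems ys irrefl by auto
  then have "set xs = set ys'" using Cons.prems ys \<open>a = b\<close> by auto
  then show ?case using Cons ys \<open>a = b\<close> by auto
qed

abbreviation consider_less :: "('a \<Rightarrow> real) \<Rightarrow> ('a \<Rightarrow> nat) \<Rightarrow> 'a \<Rightarrow> 'a \<Rightarrow> bool" where
  "consider_less Y r e f \<equiv> Y e < Y f \<or> (Y e = Y f \<and> r e < r f)"

lemma exists_consider_sorted:
  fixes Y :: "'a \<Rightarrow> real" and r :: "'a \<Rightarrow> nat"
  assumes "finite A" and "inj_on r A"
  shows "\<exists>xs. set xs = A \<and> sorted_wrt (consider_less Y r) xs"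
  using assms
proof (induction "card A" arbitrary: A)
  case 0
  then show ?case by (intro exI[of _ "[]"]) auto
next
  case (Suc n)
  then have "A \<noteq> {}" by auto
  define C where "C = {f \<in> A. Y f = Min (Y ` A)}"
  have "Min (Y ` A) \<in> Y ` A" using Suc.prems(1) \<open>A \<noteq> {}\<close> by (intro Min_in) auto
  then have "finite C" "C \<noteq> {}" using Suc.prems(1) unfolding C_def by auto
  then have "Min (r ` C) \<in> r ` C" by (intro Min_in) auto
  then obtain m where m: "m \<in> C" "r m = Min (r ` C)" by auto
  have first: "consider_less Y r m f" if "f \<in> A" "f \<noteq> m" for f
  proof (cases "f \<in> C")
    case True
    then have "r m \<le> r f" using m(2) \<open>finite C\<close> by simp
    moreover have "r m \<noteq> r f" using Suc.prems(2) that m(1) inj_onD unfolding C_def by fastforce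
    ultimately show ?thesis using True m(1) unfolding C_def by simp
  next
    case False
    have "Min (Y ` A) \<le> Y f" using Suc.prems(1) that(1) by simp
    then show ?thesis using False that(1) m(1) unfolding C_def by simp
  qed
  have "n = card (A - {m})" "inj_on r (A - {m})"
    using Suc.hyps(2) Suc.prems m(1) unfolding C_def by (auto intro: inj_on_subset)
  then obtain xs where "set xs = A - {m}" "sorted_wrt (consider_less Y r) xs"
    using Suc.hyps(1) Suc.prems(1) by blast
  then show ?case using first m(1) unfolding C_def by (intro exI[of _ "m # xs"]) auto
qed

lemma consider_order_spec:
  fixes Y :: "'a \<Rightarrow> real" and r :: "'a \<Rightarrow> nat"
  assumes "finite A" and "inj_on r A"
  shows "set (consider_order A Y r) = A \<and> sorted_wrt (consider_less Y r) (consider_order A Y r)"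
proof -
  obtain xs where xs: "set xs = A \<and> sorted_wrt (consider_less Y r) xs"
    using exists_consider_sorted[OF assms] by blast
  have "ys = xs" if "set ys = A \<and> sorted_wrt (consider_less Y r) ys" for ys
    using that xs by (intro sorted_wrt_unique[of "consider_less Y r"]) auto
  then have "\<exists>!xs. set xs = A \<and> sorted_wrt (consider_less Y r) xs"
    using xs by blast
  then show ?thesis unfolding consider_order_def by (rule theI')
qed

lemma run_process_subset:
  "run_process E X es Mt \<subseteq> Mt \<union> {f \<in> set es. X f}"
proof (induction es arbitrary: Mt)
  case (Cons f es)
  define Mt' where "Mt' = (if \<exists>f'\<in>Mt. f' \<in> delta_e E f then Mt else if X f then insert f Mt else Mt)"
  have "run_process E X (f # es) Mt = run_process E X es Mt'" by (simp add: Mt'_def)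
  also have "\<dots> \<subseteq> Mt' \<union> {f' \<in> set es. X f'}" by (rule Cons.IH)
  also have "\<dots> \<subseteq> Mt \<union> {f' \<in> set (f # es). X f'}" unfolding Mt'_def by auto
  finally show ?case .
qed simp

lemma run_process_cong:
  "(\<And>f. f \<in> set es \<Longrightarrow> X f = X' f) \<Longrightarrow> run_process E X es Mt = run_process E X' es Mt"
  by (induction es arbitrary: Mt) auto

lemma safe_if_first:
  assumes "finite Eh" and "inj_on r Eh" and "e \<in> Eh"
    and first: "\<forall>f\<in>delta_e E e \<inter> Eh. X f \<longrightarrow> Y e < Y f"
  shows "safe E Eh Y r X e"
proof -
  define xs where "xs = consider_order Eh Y r"
  have xs: "set xs = Eh" "sorted_wrt (consider_less Y r) xs"
    using consider_order_spec[OF assms(1,2)] unfolding xs_def by auto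
  define pre where "pre = takeWhile (\<lambda>f. f \<noteq> e) xs"
  obtain rest where "dropWhile (\<lambda>f. f \<noteq> e) xs = e # rest"
    using xs(1) \<open>e \<in> Eh\<close>
    by (metis (mono_tags, lifting) dropWhile_eq_Nil_conv hd_dropWhile list.collapse)
  then have "xs = pre @ e # rest" unfolding pre_def by (simp add: dropWhile_eq_Cons_conv)
  then have before: "Y f \<le> Y e" if "f \<in> set pre" for f
    using xs(2) that by (auto simp: sorted_wrt_append)
  have "f \<notin> delta_e E e \<inter> Eh" if "f \<in> run_process E X pre {}" for f
    using that run_process_subset[of E X pre "{}"] before first by force
  then show ?thesis
    unfolding safe_def Let_def xs_def[symmetric] pre_def[symmetric] using \<open>e \<in> Eh\<close> by blast
qed

lemma safe_cong:
  fixes Y Y' :: "'v set \<Rightarrow> real"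
  assumes "finite Eh" and "inj_on r Eh" and "Eh \<subseteq> E"
    and Y_order: "\<And>f f'. f \<in> E \<Longrightarrow> f' \<in> E \<Longrightarrow> (Y f \<le> Y f') = (Y' f \<le> Y' f')"
    and X_eq: "\<And>f. f \<in> E \<Longrightarrow> X f = X' f"
  shows "safe E Eh Y r X e = safe E Eh Y' r X' e"
proof -
  have less: "consider_less Y r f f' = consider_less Y' r f f'" if "f \<in> Eh" "f' \<in> Eh" for f f'
    using Y_order[of f f'] Y_order[of f' f] that \<open>Eh \<subseteq> E\<close>
    by (auto simp: less_le_not_le order_eq_iff)
  have "sorted_wrt (consider_less Y r) xs = sorted_wrt (consider_less Y' r) xs" if "set xs = Eh" for xs
    using that less sorted_wrt_mono_rel[of xs "consider_less Y r" "consider_less Y' r"]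
      sorted_wrt_mono_rel[of xs "consider_less Y' r" "consider_less Y r"] by blast
  then have "(\<lambda>xs. set xs = Eh \<and> sorted_wrt (consider_less Y r) xs)
      = (\<lambda>xs. set xs = Eh \<and> sorted_wrt (consider_less Y' r) xs)" by auto
  then have order: "consider_order Eh Y r = consider_order Eh Y' r"
    unfolding consider_order_def by simp
  have "run_process E X (takeWhile (\<lambda>f. f \<noteq> e) (consider_order Eh Y' r)) {}
      = run_process E X' (takeWhile (\<lambda>f. f \<noteq> e) (consider_order Eh Y' r)) {}"
    using consider_order_spec[OF assms(1,2), of Y'] X_eq \<open>Eh \<subseteq> E\<close>
    by (intro run_process_cong) (auto dest: set_takeWhileD)
  then show ?thesis unfolding safe_def Let_def order by simp
qed

section \<open>Exponential estimates and the function g as an integral\<close>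

lemma exp_tangent_bound:
  fixes z s :: real
  assumes "0 \<le> z"
  shows "exp (-2 * z) + (2 - s) * (z * exp (-2 * z)) \<le> exp (- s * z)"
proof -
  have "exp (- s * z) = exp (-2 * z) * exp (z * (2 - s))"
    by (simp add: exp_add[symmetric] algebra_simps)
  moreover have "1 + z * (2 - s) \<le> exp (z * (2 - s))" by (rule exp_ge_add_one_self)
  ultimately have "exp (-2 * z) * (1 + z * (2 - s)) \<le> exp (- s * z)"
    by (simp add: mult_left_mono)
  then show ?thesis by (simp add: algebra_simps)
qed

lemma mult_exp_neg_le_one: "0 \<le> (z::real) \<Longrightarrow> z * exp (-2 * z) \<le> 1"
proof -
  assume "0 \<le> z"
  have "z \<le> exp (2 * z)" using exp_ge_add_one_self[of "2 * z"] \<open>0 \<le> z\<close> by linarith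
  then have "z * exp (-2 * z) \<le> exp (2 * z) * exp (-2 * z)" by (rule mult_right_mono) simp
  then show ?thesis by (simp add: exp_add[symmetric])
qed

definition y_max :: "real \<Rightarrow> real" where
  "y_max q = (1 / q) * ln (1 / (1 - q))"

lemma exp_neg_y_max:
  assumes "0 < q" "q < 1"
  shows "exp (- q * y_max q) = 1 - q"
proof -
  have "ln (1 / (1 - q)) = - ln (1 - q)" using assms by (subst ln_div) auto
  then have "- q * y_max q = ln (1 - q)" using assms by (simp add: y_max_def field_simps)
  then show ?thesis using assms by simp
qed

lemma one_le_y_max:
  assumes "0 < q" "q < 1"
  shows "1 \<le> y_max q"
proof -
  have "ln (1 - q) \<le> (1 - q) - 1" using assms by (intro ln_le_minus_one) simp
  moreover have "ln (1 / (1 - q)) = - ln (1 - q)" using assms by (subst ln_div) auto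
  ultimately show ?thesis using assms by (simp add: y_max_def field_simps)
qed

lemma exp_neg_two_y_max_le:
  assumes "0 < q" "q < 1"
  shows "exp (-2 * y_max q) \<le> 1 / 3"
proof -
  have "exp (-2 * y_max q) \<le> exp (-2)" using one_le_y_max[OF assms] by simp
  also have "exp (-2::real) \<le> 1 / 3"
    using exp_ge_add_one_self[of 2] by (simp add: exp_minus field_simps)
  finally show ?thesis .
qed

lemma g_eq_y_max:
  assumes "0 < q" "q < 1"
  shows "g q = (1 - exp (-2 * y_max q) * (1 - q)) / (2 + q)"
proof -
  have "- ((2 + q) / q) * ln (1 / (1 - q)) = -2 * y_max q + - q * y_max q"
    unfolding y_max_def using assms by (simp add: field_simps)
  then have "exp (- ((2 + q) / q) * ln (1 / (1 - q))) = exp (-2 * y_max q) * (1 - q)"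
    by (simp only: exp_add exp_neg_y_max[OF assms])
  then show ?thesis unfolding g_def using assms by simp
qed

definition trunc_exp_cdf :: "real \<Rightarrow> real \<Rightarrow> real" where
  "trunc_exp_cdf q s = (if s < 0 then 0 else if q = 1 \<or> s \<le> y_max q
     then (1 / q) * (1 - exp (- q * s)) else 1)"

lemma trunc_exp_cdf_nonneg: "0 < q \<Longrightarrow> 0 \<le> trunc_exp_cdf q s"
  unfolding trunc_exp_cdf_def by (auto intro!: mult_nonneg_nonneg)

lemma has_real_derivative_exp_neg:
  "((\<lambda>s. exp (- a * s)) has_real_derivative - a * exp (- a * s)) (at (s::real))"
  by (auto intro!: derivative_eq_intros)

lemma tendsto_exp_neg_at_top:
  fixes a :: real
  assumes "0 < a"
  shows "((\<lambda>s. exp (- a * s)) \<longlongrightarrow> 0) at_top"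
proof -
  have "filterlim (\<lambda>s. - a * s) at_bot at_top"
    using assms by (intro filterlim_tendsto_neg_mult_at_bot[OF tendsto_const] filterlim_ident) auto
  then show ?thesis by (rule filterlim_compose[OF exp_at_bot])
qed

lemma nn_integral_exp_tail:
  fixes a m :: real
  assumes "0 < a"
  shows "(\<integral>\<^sup>+s. ennreal (a * exp (- a * s)) * indicator {m..} s \<partial>lborel) = ennreal (exp (- a * m))"
proof -
  have "(\<integral>\<^sup>+s. ennreal (a * exp (- a * s)) * indicator {m..} s \<partial>lborel) = 0 - (- exp (- a * m))"
  proof (rule nn_integral_FTC_atLeast)
    fix s :: real
    show "((\<lambda>s. - exp (- a * s)) has_real_derivative a * exp (- a * s)) (at s)"
      using DERIV_minus[OF has_real_derivative_exp_neg] by simp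
    show "0 \<le> a * exp (- a * s)" using assms by simp
  next
    show "((\<lambda>s. - exp (- a * s)) \<longlongrightarrow> 0) at_top"
      using tendsto_minus[OF tendsto_exp_neg_at_top[OF assms]] by simp
  qed measurable
  then show ?thesis by simp
qed

lemma g_eq_integral_one:
  "(\<integral>\<^sup>+s. ennreal (2 * exp (-2 * s) * trunc_exp_cdf 1 s) \<partial>lborel) = ennreal (g 1)"
proof -
  have "(\<integral>\<^sup>+s. ennreal (2 * exp (-2 * s) * trunc_exp_cdf 1 s) \<partial>lborel)
      = (\<integral>\<^sup>+s. ennreal (2 * exp (-2 * s) - 2 * exp (-3 * s)) * indicator {0..} s \<partial>lborel)"
    by (rule nn_integral_cong)
      (auto simp: trunc_exp_cdf_def indicator_def algebra_simps mult_exp_exp)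
  also have "\<dots> = ennreal (0 - (- exp (-2 * 0) + 2/3 * exp (-3 * 0)))"
  proof (rule nn_integral_FTC_atLeast)
    fix s :: real
    show "((\<lambda>s. - exp (-2 * s) + 2/3 * exp (-3 * s)) has_real_derivative
        2 * exp (-2 * s) - 2 * exp (-3 * s)) (at s)"
      by (auto intro!: derivative_eq_intros)
    assume "0 \<le> s"
    then show "0 \<le> 2 * exp (-2 * s) - 2 * exp (-3 * s)" by simp
  next
    have "((\<lambda>s::real. - exp (-2 * s) + 2/3 * exp (-3 * s)) \<longlongrightarrow> - 0 + 2/3 * 0) at_top"
      using tendsto_exp_neg_at_top[of 2] tendsto_exp_neg_at_top[of 3]
      by (intro tendsto_add tendsto_minus tendsto_mult_left) simp_all
    then show "((\<lambda>s::real. - exp (-2 * s) + 2/3 * exp (-3 * s)) \<longlongrightarrow> 0) at_top"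
      by simp
  qed measurable
  finally show ?thesis by (simp add: g_def)
qed

lemma g_eq_integral_lt_one:
  assumes q: "0 < q" "q < 1"
  shows "(\<integral>\<^sup>+s. ennreal (2 * exp (-2 * s) * trunc_exp_cdf q s) \<partial>lborel) = ennreal (g q)"
proof -
  define L where "L = y_max q"
  have "0 \<le> L" using one_le_y_max[OF q] by (simp add: L_def)
  define f where "f s = 2 * exp (-2 * s) * ((1 / q) * (1 - exp (- q * s)))" for s
  define G where "G s = (1 / q) * (- exp (-2 * s) + (2 / (2 + q)) * exp (- (2 + q) * s))" for s
  have "(\<integral>\<^sup>+s. ennreal (2 * exp (-2 * s) * trunc_exp_cdf q s) \<partial>lborel)
      = (\<integral>\<^sup>+s. ennreal (f s) * indicator {0..L} s + ennreal (2 * exp (-2 * s)) * indicator {L..} s \<partial>lborel)"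
    using AE_lborel_singleton[of L]
    by (intro nn_integral_cong_AE, elim AE_mp, intro AE_I2 impI)
      (use q \<open>0 \<le> L\<close> in \<open>auto simp: trunc_exp_cdf_def f_def L_def indicator_def\<close>)
  also have "\<dots> = (\<integral>\<^sup>+s. ennreal (f s) * indicator {0..L} s \<partial>lborel)
      + (\<integral>\<^sup>+s. ennreal (2 * exp (-2 * s)) * indicator {L..} s \<partial>lborel)"
    by (rule nn_integral_add) (auto simp: f_def)
  also have "(\<integral>\<^sup>+s. ennreal (f s) * indicator {0..L} s \<partial>lborel) = ennreal (G L - G 0)"
  proof (rule nn_integral_FTC_Icc)
    fix s :: real
    assume "s \<in> {0..L}"
    then show "0 \<le> f s" using q unfolding f_def by (auto intro!: mult_nonneg_nonneg)
    have eq: "(2 / (2 + q)) * (- (2 + q) * exp (- (2 + q) * s)) = - 2 * (exp (-2 * s) * exp (- q * s))"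
      using q by (simp add: field_simps mult_exp_exp)
    have "(G has_real_derivative
        (1 / q) * (- (-2 * exp (-2 * s)) + - 2 * (exp (-2 * s) * exp (- q * s)))) (at s)"
      unfolding G_def eq[symmetric] by (intro DERIV_cmult DERIV_add DERIV_minus has_real_derivative_exp_neg)
    then show "(G has_real_derivative f s) (at s)" by (simp add: f_def algebra_simps)
  qed (use \<open>0 \<le> L\<close> in \<open>auto simp: f_def\<close>)
  also have "(\<integral>\<^sup>+s. ennreal (2 * exp (-2 * s)) * indicator {L..} s \<partial>lborel) = ennreal (exp (-2 * L))"
    using nn_integral_exp_tail[of 2 L] by simp
  also have "ennreal (G L - G 0) + ennreal (exp (-2 * L)) = ennreal (g q)"
  proof -
    have "exp (- (2 + q) * L) = exp (-2 * L) * exp (- q * L)"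
      unfolding exp_add[symmetric] by (simp add: algebra_simps)
    also have "exp (- q * L) = 1 - q" unfolding L_def by (rule exp_neg_y_max[OF q])
    finally have b: "exp (- (2 + q) * L) = exp (-2 * L) * (1 - q)" .
    have G: "G L - G 0 = (1 - 3 * exp (-2 * L)) / (2 + q)"
      unfolding G_def b using q by (simp add: field_simps)
    then have "0 \<le> G L - G 0" using exp_neg_two_y_max_le[OF q] q by (simp add: L_def)
    then have "ennreal (G L - G 0) + ennreal (exp (-2 * L)) = ennreal (G L - G 0 + exp (-2 * L))"
      by (simp add: ennreal_plus)
    also have "G L - G 0 + exp (-2 * L) = g q"
      unfolding G g_eq_y_max[OF q] L_def[symmetric] using q by (simp add: field_simps)
    finally show ?thesis .
  qed
  finally show ?thesis .
qed

lemma g_eq_integral: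
  assumes "0 < q" "q \<le> 1"
  shows "(\<integral>\<^sup>+s. ennreal (2 * exp (-2 * s) * trunc_exp_cdf q s) \<partial>lborel) = ennreal (g q)"
  using assms g_eq_integral_one g_eq_integral_lt_one by (cases "q = 1") auto

lemma (in sigma_finite_measure) nn_integral_exp_neg_eq:
  fixes T :: "'a \<Rightarrow> real"
  assumes "0 < a" and [measurable]: "T \<in> borel_measurable M"
  shows "(\<integral>\<^sup>+\<omega>. ennreal (exp (- a * T \<omega>)) \<partial>M)
    = (\<integral>\<^sup>+s. ennreal (a * exp (- a * s)) * emeasure M {\<omega>\<in>space M. T \<omega> \<le> s} \<partial>lborel)"
proof -
  interpret pair_sigma_finite M lborel ..
  have "(\<integral>\<^sup>+\<omega>. ennreal (exp (- a * T \<omega>)) \<partial>M)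
      = (\<integral>\<^sup>+\<omega>. (\<integral>\<^sup>+s. ennreal (a * exp (- a * s)) * indicator {T \<omega>..} s \<partial>lborel) \<partial>M)"
    using nn_integral_exp_tail[OF \<open>0 < a\<close>] by simp
  also have "\<dots> = (\<integral>\<^sup>+s. (\<integral>\<^sup>+\<omega>. ennreal (a * exp (- a * s)) * indicator {T \<omega>..} s \<partial>M) \<partial>lborel)"
  proof (rule Fubini'[symmetric])
    have "(\<lambda>z. ennreal (a * exp (- a * snd z)) * indicator {T (fst z)..} (snd z))
        = (\<lambda>z. ennreal (a * exp (- a * snd z)) * (if T (fst z) \<le> snd z then 1 else 0))"
      by (auto simp: indicator_def fun_eq_iff)
    also have "\<dots> \<in> borel_measurable (M \<Otimes>\<^sub>M lborel)" by measurable
    finally show "case_prod (\<lambda>\<omega> s. ennreal (a * exp (- a * s)) * indicator {T \<omega>..} s)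
        \<in> borel_measurable (M \<Otimes>\<^sub>M lborel)" by (simp add: case_prod_beta')
  qed
  also have "\<dots> = (\<integral>\<^sup>+s. ennreal (a * exp (- a * s)) * emeasure M {\<omega>\<in>space M. T \<omega> \<le> s} \<partial>lborel)"
  proof (rule nn_integral_cong)
    fix s :: real
    have "(\<integral>\<^sup>+\<omega>. ennreal (a * exp (- a * s)) * indicator {T \<omega>..} s \<partial>M)
        = (\<integral>\<^sup>+\<omega>. ennreal (a * exp (- a * s)) * indicator {\<omega>\<in>space M. T \<omega> \<le> s} \<omega> \<partial>M)"
      by (rule nn_integral_cong) (auto simp: indicator_def)
    then show "(\<integral>\<^sup>+\<omega>. ennreal (a * exp (- a * s)) * indicator {T \<omega>..} s \<partial>M)
        = ennreal (a * exp (- a * s)) * emeasure M {\<omega>\<in>space M. T \<omega> \<le> s}"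
      by (simp add: nn_integral_cmult nn_integral_indicator)
  qed
  finally show ?thesis .
qed

lemma (in prob_space) emeasure_less_indep_var:
  fixes T R :: "'a \<Rightarrow> ereal"
  assumes "indep_var borel T borel R"
  shows "emeasure M {\<omega>\<in>space M. T \<omega> < R \<omega>}
     = (\<integral>\<^sup>+t. emeasure M {\<omega>\<in>space M. t < R \<omega>} \<partial>distr M borel T)"
proof -
  have rv[measurable]: "random_variable borel T" "random_variable borel R"
    and distr_pair: "distr M borel T \<Otimes>\<^sub>M distr M borel R = distr M (borel \<Otimes>\<^sub>M borel) (\<lambda>x. (T x, R x))"
    using assms indep_var_distribution_eq by auto
  interpret R: prob_space "distr M borel R" by (rule prob_space_distr[OF rv(2)])
  let ?S = "{z \<in> space (borel \<Otimes>\<^sub>M borel). (fst z :: ereal) < snd z}"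
  have S: "?S \<in> sets (borel \<Otimes>\<^sub>M borel)"
    using borel_measurable_less[OF measurable_fst measurable_snd] by simp
  have "emeasure M {\<omega>\<in>space M. T \<omega> < R \<omega>} = emeasure (distr M (borel \<Otimes>\<^sub>M borel) (\<lambda>x. (T x, R x))) ?S"
    by (subst emeasure_distr[OF _ S]) (auto simp: space_pair_measure intro!: arg_cong[where f="emeasure M"])
  also have "\<dots> = (\<integral>\<^sup>+t. emeasure (distr M borel R) (Pair t -` ?S) \<partial>distr M borel T)"
    using S by (simp add: distr_pair[symmetric] R.emeasure_pair_measure_alt cong: sets_pair_measure_cong)
  also have "\<dots> = (\<integral>\<^sup>+t. emeasure M {\<omega>\<in>space M. t < R \<omega>} \<partial>distr M borel T)"
  proof (rule nn_integral_cong)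
    fix t :: ereal
    have "Pair t -` ?S = {r. t < r}" "{r. t < r} \<in> sets (borel :: ereal measure)"
      by (auto simp: space_pair_measure)
    then show "emeasure (distr M borel R) (Pair t -` ?S) = emeasure M {\<omega>\<in>space M. t < R \<omega>}"
      by (simp add: emeasure_distr Collect_conj_eq Int_commute vimage_def)
  qed
  finally show ?thesis .
qed

lemma borel_measurable_if_ereal:
  assumes [measurable]: "P \<in> measurable N (count_space UNIV)" "f \<in> borel_measurable N"
  shows "(\<lambda>\<omega>. if P \<omega> then ereal (f \<omega>) else \<infinity>) \<in> borel_measurable N"
  by measurable

lemma Int_stable_vimage: "Int_stable {h -` A \<inter> \<Omega> | A. A \<in> sets K}"
  unfolding Int_stable_def
proof safe
  fix A B assume "A \<in> sets K" "B \<in> sets K"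
  then show "\<exists>C. (h -` A \<inter> \<Omega>) \<inter> (h -` B \<inter> \<Omega>) = h -` C \<inter> \<Omega> \<and> C \<in> sets K"
    by (intro exI[of _ "A \<inter> B"]) auto
qed

locale probing_setting =
  fixes V :: "'v set" and E :: "'v set set"
    and p x :: "'v set \<Rightarrow> real" and t :: "'v \<Rightarrow> nat"
    and M :: "'w measure"
    and Ehat :: "'w \<Rightarrow> 'v set set"
    and Y :: "'v set \<Rightarrow> 'w \<Rightarrow> real"
    and X :: "'v set \<Rightarrow> 'w \<Rightarrow> bool"
    and r :: "'v set \<Rightarrow> nat"
    and e :: "'v set"
  assumes bip: "bipartite_graph V E"
    and p_range: "\<forall>f\<in>E. 0 < p f \<and> p f \<le> 1"
    and feas: "lp_bip_feasible V E p t x"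
    and M: "prob_space M"
    and Ehat_meas: "Ehat \<in> measurable M (count_space UNIV)"
    and Ehat_sub: "\<forall>\<omega>\<in>space M. Ehat \<omega> \<subseteq> E"
    and marg: "\<forall>f\<in>E. measure M {\<omega> \<in> space M. f \<in> Ehat \<omega>} = x f"
    and negcor: "\<forall>v\<in>V. \<forall>S\<subseteq>delta_v E v. \<forall>b::bool.
        measure M {\<omega> \<in> space M. \<forall>f\<in>S. (f \<in> Ehat \<omega>) = b}
          \<le> (\<Prod>f\<in>S. measure M {\<omega> \<in> space M. (f \<in> Ehat \<omega>) = b})"
    and Y_meas: "\<forall>f\<in>E. Y f \<in> borel_measurable M"
    and Y_range: "\<forall>f\<in>E. AE \<omega> in M. 0 \<le> Y f \<omega> \<and>
        (p f = 1 \<or> Y f \<omega> \<le> (1 / p f) * ln (1 / (1 - p f)))"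
    and Y_cdf: "\<forall>f\<in>E. \<forall>y. 0 \<le> y \<and> (p f = 1 \<or> y \<le> (1 / p f) * ln (1 / (1 - p f))) \<longrightarrow>
        measure M {\<omega> \<in> space M. Y f \<omega> \<le> y} = (1 / p f) * (1 - exp (- p f * y))"
    and X_meas: "\<forall>f\<in>E. X f \<in> measurable M (count_space UNIV)"
    and X_prob: "\<forall>f\<in>E. measure M {\<omega> \<in> space M. X f \<omega>} = p f"
    and indep: "prob_space.indep_sets M
        (\<lambda>i. case i of
            SrcE \<Rightarrow> {Ehat -` A \<inter> space M | A. A \<in> sets (count_space UNIV)}
          | SrcY f \<Rightarrow> {Y f -` A \<inter> space M | A. A \<in> sets borel}
          | SrcX f \<Rightarrow> {X f -` A \<inter> space M | A. A \<in> sets (count_space UNIV)})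
        ({SrcE} \<union> SrcY ` E \<union> SrcX ` E)"
    and r_inj: "inj_on r E"
    and eE: "e \<in> E"

sublocale probing_setting \<subseteq> prob_space M by (rule M)

context probing_setting
begin

lemma finite_E: "finite E"
proof -
  have "finite V" "\<forall>e\<in>E. e \<subseteq> V" using bip unfolding bipartite_graph_def by auto
  then show ?thesis by (meson Pow_iff finite_Pow_iff rev_finite_subset subsetI)
qed

lemma finite_Ehat: "\<omega> \<in> space M \<Longrightarrow> finite (Ehat \<omega>)"
  using Ehat_sub finite_E by (auto intro: finite_subset)

lemma x_nonneg: "f \<in> E \<Longrightarrow> 0 \<le> x f"
  using feas unfolding lp_bip_feasible_def by auto

lemma prob_Y_le:
  assumes "f \<in> E" "0 \<le> y" "p f = 1 \<or> y \<le> y_max (p f)"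
  shows "prob {\<omega>\<in>space M. Y f \<omega> \<le> y} = (1 / p f) * (1 - exp (- p f * y))"
  using Y_cdf assms unfolding y_max_def by blast

lemma Y_measurable[measurable]: "f \<in> E \<Longrightarrow> Y f \<in> borel_measurable M"
  using Y_meas by auto

lemma X_measurable[measurable]: "f \<in> E \<Longrightarrow> X f \<in> measurable M (count_space UNIV)"
  using X_meas by auto

lemmas Ehat_measurable[measurable] = Ehat_meas

subsection \<open>Independence of the sources of randomness\<close>

definition sources :: "'v set source set" where
  "sources = {SrcE} \<union> SrcY ` E \<union> SrcX ` E"

definition source_sets :: "'v set source \<Rightarrow> 'w set set" where
  "source_sets i = (case i of
       SrcE \<Rightarrow> {Ehat -` A \<inter> space M | A. A \<in> sets (count_space UNIV)}
     | SrcY f \<Rightarrow> {Y f -` A \<inter> space M | A. A \<in> sets borel}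
     | SrcX f \<Rightarrow> {X f -` A \<inter> space M | A. A \<in> sets (count_space UNIV)})"

definition sigma_sources :: "'v set source set \<Rightarrow> 'w measure" where
  "sigma_sources P = sigma (space M) (\<Union>i\<in>P. source_sets i)"

lemma source_sets_Pow: "(\<Union>i\<in>P. source_sets i) \<subseteq> Pow (space M)"
  unfolding source_sets_def by (auto split: source.splits)

lemma sets_sigma_sources: "sets (sigma_sources P) = sigma_sets (space M) (\<Union>i\<in>P. source_sets i)"
  unfolding sigma_sources_def using source_sets_Pow by (rule sets_measure_of)

lemma space_sigma_sources[simp]: "space (sigma_sources P) = space M"
  unfolding sigma_sources_def using source_sets_Pow by (rule space_measure_of)

lemma source_sets_in_sigma_sources: "i \<in> P \<Longrightarrow> a \<in> source_sets i \<Longrightarrow> a \<in> sets (sigma_sources P)"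
  unfolding sets_sigma_sources by auto

lemma measurable_sigma_sources:
  shows Y_measurable_sigma_sources: "SrcY f \<in> P \<Longrightarrow> Y f \<in> borel_measurable (sigma_sources P)"
    and X_measurable_sigma_sources: "SrcX f \<in> P \<Longrightarrow> X f \<in> measurable (sigma_sources P) (count_space UNIV)"
    and Ehat_measurable_sigma_sources: "SrcE \<in> P \<Longrightarrow> Ehat \<in> measurable (sigma_sources P) (count_space UNIV)"
  by (intro measurableI; simp; rule source_sets_in_sigma_sources, assumption, force simp: source_sets_def)+

lemma sets_Collect_sigma_sources:
  "Measurable.pred (sigma_sources P) Q \<Longrightarrow> {\<omega>\<in>space M. Q \<omega>} \<in> sets (sigma_sources P)"
  by (simp add: pred_def)

lemma indep_sets_sigma_sources:
  assumes "disjoint_family_on G J" "(\<Union>j\<in>J. G j) \<subseteq> sources"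
  shows "indep_sets (\<lambda>j. sets (sigma_sources (G j))) J"
proof -
  have "indep_sets source_sets sources"
    using indep unfolding sources_def source_sets_def[abs_def] .
  moreover have "Int_stable (source_sets i)" for i
    by (cases i) (simp_all only: source_sets_def source.case Int_stable_vimage)
  ultimately show ?thesis unfolding sets_sigma_sources
    by (intro indep_sets_collect_sigma[OF indep_sets_mono_index[OF assms(2)] _ assms(1)])
qed

lemma indep_set_sigma_sources:
  assumes "P \<subseteq> sources" "Q \<subseteq> sources" "P \<inter> Q = {}"
  shows "indep_set (sets (sigma_sources P)) (sets (sigma_sources Q))"
proof -
  have "indep_sets (\<lambda>j. sets (sigma_sources (case_bool P Q j))) UNIV"
    by (rule indep_sets_sigma_sources) (use assms in \<open>auto simp: disjoint_family_on_def split: bool.splits\<close>)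
  then show ?thesis unfolding indep_set_def
    by (rule indep_sets_cong[THEN iffD1, rotated -1]) (auto split: bool.splits)
qed

lemma prob_Int_sigma_sources:
  assumes "P \<subseteq> sources" "Q \<subseteq> sources" "P \<inter> Q = {}"
    and "a \<in> sets (sigma_sources P)" "b \<in> sets (sigma_sources Q)"
  shows "prob (a \<inter> b) = prob a * prob b"
  using indep_setD[OF indep_set_sigma_sources[OF assms(1-3)] assms(4,5)] .

lemma prob_X_and_Y_le:
  assumes "f \<in> E"
  shows "prob {\<omega>\<in>space M. X f \<omega> \<and> Y f \<omega> \<le> s} = p f * prob {\<omega>\<in>space M. Y f \<omega> \<le> s}"
proof -
  note [measurable] = X_measurable_sigma_sources[of f "{SrcX f}"] Y_measurable_sigma_sources[of f "{SrcY f}"]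
  have "{\<omega>\<in>space M. X f \<omega>} \<in> sets (sigma_sources {SrcX f})"
    "{\<omega>\<in>space M. Y f \<omega> \<le> s} \<in> sets (sigma_sources {SrcY f})"
    by (intro sets_Collect_sigma_sources; measurable)+
  then have "prob ({\<omega>\<in>space M. X f \<omega>} \<inter> {\<omega>\<in>space M. Y f \<omega> \<le> s})
      = prob {\<omega>\<in>space M. X f \<omega>} * prob {\<omega>\<in>space M. Y f \<omega> \<le> s}"
    by (intro prob_Int_sigma_sources) (use assms in \<open>auto simp: sources_def\<close>)
  moreover have "{\<omega>\<in>space M. X f \<omega>} \<inter> {\<omega>\<in>space M. Y f \<omega> \<le> s} = {\<omega>\<in>space M. X f \<omega> \<and> Y f \<omega> \<le> s}"
    by auto
  ultimately show ?thesis using X_prob assms by simp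
qed

definition rivals :: "'v set set" where
  "rivals = delta_e E e"

lemma finite_rivals: "finite rivals" and rivals_subset: "rivals \<subseteq> E" and e_notin_rivals: "e \<notin> rivals"
  using finite_E unfolding rivals_def delta_e_def by auto

definition rival_time :: "'v set \<Rightarrow> 'w \<Rightarrow> ereal" where
  "rival_time f \<omega> = (if X f \<omega> then ereal (Y f \<omega>) else \<infinity>)"

definition first_rival_time :: "'v set set \<Rightarrow> 'w \<Rightarrow> ereal" where
  "first_rival_time B \<omega> = (if rivals \<inter> B = {} then \<infinity> else Min ((\<lambda>f. rival_time f \<omega>) ` (rivals \<inter> B)))"

definition rival_mass :: "'v set set \<Rightarrow> real" where
  "rival_mass B = (\<Sum>f\<in>rivals \<inter> B. p f)"

lemma rival_mass_nonneg: "0 \<le> rival_mass B"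
  unfolding rival_mass_def using p_range rivals_subset by (intro sum_nonneg) (auto simp: less_imp_le)

lemma less_first_rival_time_iff:
  "ereal s < first_rival_time B \<omega> \<longleftrightarrow> (\<forall>f\<in>rivals \<inter> B. X f \<omega> \<longrightarrow> s < Y f \<omega>)"
proof (cases "rivals \<inter> B = {}")
  case False
  then have "ereal s < first_rival_time B \<omega> \<longleftrightarrow> (\<forall>f\<in>rivals \<inter> B. ereal s < rival_time f \<omega>)"
    using finite_rivals by (simp add: first_rival_time_def Min_gr_iff)
  then show ?thesis by (auto simp: rival_time_def)
qed (simp add: first_rival_time_def)

lemma first_rival_time_measurable:
  assumes "\<And>f. f \<in> rivals \<inter> B \<Longrightarrow> Y f \<in> borel_measurable N"
    and "\<And>f. f \<in> rivals \<inter> B \<Longrightarrow> X f \<in> measurable N (count_space UNIV)"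
  shows "first_rival_time B \<in> borel_measurable N"
proof (cases "rivals \<inter> B = {}")
  case False
  have "(\<lambda>\<omega>. Min ((\<lambda>f. rival_time f \<omega>) ` (rivals \<inter> B))) \<in> borel_measurable N"
    using finite_rivals assms unfolding rival_time_def
    by (intro borel_measurable_Min borel_measurable_if_ereal) auto
  then show ?thesis using False unfolding first_rival_time_def by simp
qed (simp add: first_rival_time_def[abs_def])

lemma first_rival_time_measurable_sigma_sources:
  "SrcY ` (rivals \<inter> B) \<union> SrcX ` (rivals \<inter> B) \<subseteq> P \<Longrightarrow> first_rival_time B \<in> borel_measurable (sigma_sources P)"
  by (rule first_rival_time_measurable) (auto intro!: measurable_sigma_sources)

lemma first_rival_time_measurable_M[measurable]: "first_rival_time B \<in> borel_measurable M"
  by (rule first_rival_time_measurable) (use rivals_subset in auto)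

lemma prob_less_first_rival_time:
  assumes "B \<subseteq> E"
  shows "prob {\<omega>\<in>space M. ereal s < first_rival_time B \<omega>}
    = (\<Prod>f\<in>rivals \<inter> B. 1 - p f * prob {\<omega>\<in>space M. Y f \<omega> \<le> s})"
proof -
  define J where "J = rivals \<inter> B"
  define A where "A f = {\<omega>\<in>space M. \<not> (X f \<omega> \<and> Y f \<omega> \<le> s)}" for f
  have J: "J \<subseteq> E" "finite J" using finite_rivals rivals_subset assms unfolding J_def by auto
  have prob_A: "prob (A f) = 1 - p f * prob {\<omega>\<in>space M. Y f \<omega> \<le> s}" if "f \<in> J" for f
  proof -
    have "f \<in> E" using that J by auto
    then have "{\<omega>\<in>space M. X f \<omega> \<and> Y f \<omega> \<le> s} \<in> events" by measurable
    moreover have "A f = space M - {\<omega>\<in>space M. X f \<omega> \<and> Y f \<omega> \<le> s}" unfolding A_def by auto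
    ultimately show ?thesis using prob_compl prob_X_and_Y_le \<open>f \<in> E\<close> by auto
  qed
  have "{\<omega>\<in>space M. ereal s < first_rival_time B \<omega>} = {\<omega>\<in>space M. \<forall>f\<in>J. \<omega> \<in> A f}"
    unfolding J_def A_def less_first_rival_time_iff by (auto simp: not_le)
  also have "prob \<dots> = (\<Prod>f\<in>J. prob (A f))"
  proof (cases "J = {}")
    case False
    have "indep_sets (\<lambda>f. sets (sigma_sources {SrcY f, SrcX f})) J"
      by (rule indep_sets_sigma_sources) (use J in \<open>auto simp: disjoint_family_on_def sources_def\<close>)
    moreover have "A f \<in> sets (sigma_sources {SrcY f, SrcX f})" for f
    proof -
      note [measurable] = Y_measurable_sigma_sources[of f "{SrcY f, SrcX f}"]
        X_measurable_sigma_sources[of f "{SrcY f, SrcX f}"]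
      show ?thesis unfolding A_def by (intro sets_Collect_sigma_sources) measurable
    qed
    ultimately have "prob (\<Inter>f\<in>J. A f) = (\<Prod>f\<in>J. prob (A f))"
      using J False by (intro indep_setsD[OF _ subset_refl]) auto
    moreover have "(\<Inter>f\<in>J. A f) = {\<omega>\<in>space M. \<forall>f\<in>J. \<omega> \<in> A f}"
      using False unfolding A_def by auto
    ultimately show ?thesis by simp
  qed (simp add: prob_space)
  finally show ?thesis using prob_A unfolding J_def by simp
qed

lemma exp_le_one_minus_prob_X_and_Y_le:
  assumes "f \<in> E" and "0 \<le> s"
  shows "exp (- p f * s) \<le> 1 - p f * prob {\<omega>\<in>space M. Y f \<omega> \<le> s}"
proof -
  have pf: "0 < p f" "p f \<le> 1" using p_range assms by auto
  show ?thesis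
  proof (cases "p f = 1 \<or> s \<le> y_max (p f)")
    case True
    then have "prob {\<omega>\<in>space M. Y f \<omega> \<le> s} = (1 / p f) * (1 - exp (- p f * s))"
      using prob_Y_le assms by auto
    then show ?thesis using pf by simp
  next
    case False
    then have "exp (- p f * s) \<le> exp (- p f * y_max (p f))" using pf by simp
    also have "\<dots> = 1 - p f" using False pf exp_neg_y_max by simp
    also have "\<dots> \<le> 1 - p f * prob {\<omega>\<in>space M. Y f \<omega> \<le> s}" using pf by (simp add: mult_left_le)
    finally show ?thesis .
  qed
qed

lemma exp_le_prob_less_first_rival_time:
  assumes "B \<subseteq> E" and "0 \<le> s"
  shows "exp (- s * rival_mass B) \<le> prob {\<omega>\<in>space M. ereal s < first_rival_time B \<omega>}"
proof -
  have "exp (- s * rival_mass B) = (\<Prod>f\<in>rivals \<inter> B. exp (- p f * s))"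
    using finite_rivals
    by (simp add: rival_mass_def exp_sum[symmetric] sum_distrib_left sum_negf mult.commute)
  also have "\<dots> \<le> (\<Prod>f\<in>rivals \<inter> B. 1 - p f * prob {\<omega>\<in>space M. Y f \<omega> \<le> s})"
    by (rule prod_mono) (use exp_le_one_minus_prob_X_and_Y_le assms rivals_subset in auto)
  finally show ?thesis using prob_less_first_rival_time[OF assms(1)] by simp
qed

lemma sigma_sets_vimage_subset:
  assumes "h \<in> measurable (sigma_sources P) K"
  shows "sigma_sets (space M) {h -` A \<inter> space M | A. A \<in> sets K} \<subseteq> sets (sigma_sources P)"
  using measurable_sets[OF assms]
  by (intro sets.sigma_sets_subset[of _ "sigma_sources P", simplified]) auto

lemma indep_var_Y_first_rival_time:
  assumes "B \<subseteq> E"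
  shows "indep_var borel (\<lambda>\<omega>. ereal (Y e \<omega>)) borel (first_rival_time B)"
proof -
  let ?P = "{SrcY e}" and ?Q = "SrcY ` (rivals \<inter> B) \<union> SrcX ` (rivals \<inter> B)"
  have "(\<lambda>\<omega>. ereal (Y e \<omega>)) \<in> borel_measurable (sigma_sources ?P)"
    using Y_measurable_sigma_sources[of e ?P] by measurable
  moreover have "first_rival_time B \<in> borel_measurable (sigma_sources ?Q)"
    by (rule first_rival_time_measurable_sigma_sources) simp
  moreover have "indep_set (sets (sigma_sources ?P)) (sets (sigma_sources ?Q))"
    using rivals_subset e_notin_rivals eE by (intro indep_set_sigma_sources) (auto simp: sources_def)
  ultimately show ?thesis unfolding indep_var_eq using eE
    by (auto simp: indep_set_def elim!: indep_sets_mono_sets dest!: sigma_sets_vimage_subset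
        split: bool.splits)
qed

subsection \<open>Beating the rivals for a fixed random set\<close>

text \<open>Y e is nonnegative only almost surely; truncating it makes all moments below bounded.\<close>

definition Te :: "'w \<Rightarrow> real" where
  "Te \<omega> = max 0 (Y e \<omega>)"

lemma Te_measurable[measurable]: "Te \<in> borel_measurable M"
  unfolding Te_def using eE by measurable

lemma Te_nonneg: "0 \<le> Te \<omega>"
  unfolding Te_def by simp

lemma integrable_exp_Te: "integrable M (\<lambda>\<omega>. exp (- s * Te \<omega>))" if "0 \<le> s"
  using that by (intro integrable_const_bound[where B=1]) (auto simp: Te_nonneg)

lemma integrable_Te_exp_Te: "integrable M (\<lambda>\<omega>. Te \<omega> * exp (-2 * Te \<omega>))"
  using mult_exp_neg_le_one[OF Te_nonneg] Te_nonneg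
  by (intro integrable_const_bound[where B=1]) auto

lemma expectation_exp_le_prob_beat:
  assumes "B \<subseteq> E"
  shows "expectation (\<lambda>\<omega>. exp (- rival_mass B * Te \<omega>))
    \<le> prob {\<omega>\<in>space M. ereal (Y e \<omega>) < first_rival_time B \<omega>}"
proof -
  define T where "T = (\<lambda>\<omega>. ereal (Y e \<omega>))"
  define k where "k t = exp (- rival_mass B * max 0 t)" for t
  have T_meas[measurable]: "T \<in> borel_measurable M" unfolding T_def using eE by measurable
  have "ennreal (expectation (\<lambda>\<omega>. k (Y e \<omega>))) = (\<integral>\<^sup>+\<omega>. ennreal (k (Y e \<omega>)) \<partial>M)"
    using integrable_exp_Te[OF rival_mass_nonneg]
    by (intro nn_integral_eq_integral[symmetric]) (auto simp: k_def Te_def)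
  also have "\<dots> = (\<integral>\<^sup>+t. ennreal (k (real_of_ereal t)) \<partial>distr M borel T)"
    by (subst nn_integral_distr[OF T_meas]) (auto simp: T_def k_def)
  also have "\<dots> \<le> (\<integral>\<^sup>+t. emeasure M {\<omega>\<in>space M. t < first_rival_time B \<omega>} \<partial>distr M borel T)"
  proof (rule nn_integral_mono_AE)
    have "AE t in distr M borel T. 0 \<le> t \<and> t \<noteq> \<infinity>"
      using Y_range eE by (subst AE_distr_iff) (auto simp: T_def elim!: AE_mp)
    then show "AE t in distr M borel T.
        ennreal (k (real_of_ereal t)) \<le> emeasure M {\<omega>\<in>space M. t < first_rival_time B \<omega>}"
    proof (rule eventually_mono)
      fix t :: ereal
      assume "0 \<le> t \<and> t \<noteq> \<infinity>"
      then obtain s where "t = ereal s" "0 \<le> s" by (cases t) auto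
      then show "ennreal (k (real_of_ereal t)) \<le> emeasure M {\<omega>\<in>space M. t < first_rival_time B \<omega>}"
        using exp_le_prob_less_first_rival_time[OF assms, of s]
        by (simp add: k_def emeasure_eq_measure ennreal_leI mult.commute)
    qed
  qed
  also have "\<dots> = emeasure M {\<omega>\<in>space M. T \<omega> < first_rival_time B \<omega>}"
    using emeasure_less_indep_var[OF indep_var_Y_first_rival_time[OF assms]] by (simp add: T_def)
  finally show ?thesis
    by (simp add: k_def Te_def T_def emeasure_eq_measure ennreal_le_iff)
qed

definition exp_moment :: real where
  "exp_moment = expectation (\<lambda>\<omega>. exp (-2 * Te \<omega>))"

definition texp_moment :: real where
  "texp_moment = expectation (\<lambda>\<omega>. Te \<omega> * exp (-2 * Te \<omega>))"

lemma texp_moment_nonneg: "0 \<le> texp_moment"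
  unfolding texp_moment_def using Te_nonneg by (intro integral_nonneg_AE) auto

lemma tangent_le_prob_beat:
  assumes "B \<subseteq> E"
  shows "exp_moment + (2 - rival_mass B) * texp_moment
    \<le> prob {\<omega>\<in>space M. ereal (Y e \<omega>) < first_rival_time B \<omega>}"
proof -
  have "exp_moment + (2 - rival_mass B) * texp_moment
      = expectation (\<lambda>\<omega>. exp (-2 * Te \<omega>) + (2 - rival_mass B) * (Te \<omega> * exp (-2 * Te \<omega>)))"
    using integrable_exp_Te[of 2] integrable_Te_exp_Te by (simp add: exp_moment_def texp_moment_def)
  also have "\<dots> \<le> expectation (\<lambda>\<omega>. exp (- rival_mass B * Te \<omega>))"
    using integrable_exp_Te[of 2] integrable_Te_exp_Te integrable_exp_Te[OF rival_mass_nonneg]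
    by (intro integral_mono exp_tangent_bound Te_nonneg) auto
  finally show ?thesis using expectation_exp_le_prob_beat[OF assms] by simp
qed

subsection \<open>Averaging over the random set\<close>

lemma prob_Ehat_eq_sum:
  "prob {\<omega>\<in>space M. P (Ehat \<omega>)} = (\<Sum>B\<in>{B\<in>Pow E. P B}. prob {\<omega>\<in>space M. Ehat \<omega> = B})"
proof -
  have "{\<omega>\<in>space M. P (Ehat \<omega>)} = (\<Union>B\<in>{B\<in>Pow E. P B}. {\<omega>\<in>space M. Ehat \<omega> = B})"
    using Ehat_sub by auto
  then show ?thesis
    using finite_E by (auto intro!: measure_finite_Union simp: disjoint_family_on_def)
qed

lemma sum_prob_Ehat_eq: "(\<Sum>B\<in>{B\<in>Pow E. e \<in> B}. prob {\<omega>\<in>space M. Ehat \<omega> = B}) = x e"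
  using prob_Ehat_eq_sum[of "\<lambda>B. e \<in> B"] marg eE by simp

lemma prob_pair_le:
  assumes "f \<in> rivals"
  shows "prob {\<omega>\<in>space M. e \<in> Ehat \<omega> \<and> f \<in> Ehat \<omega>} \<le> x e * x f"
proof -
  have f: "f \<in> E" "f \<noteq> e" "f \<inter> e \<noteq> {}" using assms unfolding rivals_def delta_e_def by auto
  then obtain v where "v \<in> f" "v \<in> e" by auto
  moreover have "e \<subseteq> V" using bip eE unfolding bipartite_graph_def by auto
  ultimately have "v \<in> V" "{e, f} \<subseteq> delta_v E v" using f eE unfolding delta_v_def by auto
  then have "prob {\<omega> \<in> space M. \<forall>g\<in>{e, f}. (g \<in> Ehat \<omega>) = True}
      \<le> (\<Prod>g\<in>{e, f}. prob {\<omega> \<in> space M. (g \<in> Ehat \<omega>) = True})"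
    using negcor by blast
  then show ?thesis using f eE marg by simp
qed

lemma sum_p_x_rivals_le: "(\<Sum>f\<in>rivals. p f * x f) \<le> 2"
proof -
  have "e \<subseteq> V" "card e = 2" using bip eE unfolding bipartite_graph_def by auto
  then obtain u w where uw: "e = {u, w}" "u \<in> V" "w \<in> V" by (auto simp: card_2_iff)
  have nonneg: "0 \<le> p f * x f" if "f \<in> E" for f using p_range x_nonneg that by (simp add: less_imp_le)
  have fin: "finite (delta_v E u)" "finite (delta_v E w)" using finite_E unfolding delta_v_def by auto
  have "rivals \<subseteq> delta_v E u \<union> delta_v E w"
    using uw unfolding rivals_def delta_e_def delta_v_def by auto
  then have "(\<Sum>f\<in>rivals. p f * x f) \<le> (\<Sum>f\<in>delta_v E u \<union> delta_v E w. p f * x f)"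
    using fin nonneg by (intro sum_mono2) (auto simp: delta_v_def)
  also have "\<dots> = (\<Sum>f\<in>delta_v E u. p f * x f) + (\<Sum>f\<in>delta_v E w. p f * x f)
      - (\<Sum>f\<in>delta_v E u \<inter> delta_v E w. p f * x f)"
    using fin by (rule sum_Un)
  also have "\<dots> \<le> (\<Sum>f\<in>delta_v E u. p f * x f) + (\<Sum>f\<in>delta_v E w. p f * x f)"
    using nonneg by (auto intro!: sum_nonneg simp: delta_v_def)
  also have "\<dots> \<le> 1 + 1" using feas uw unfolding lp_bip_feasible_def by (intro add_mono) auto
  finally show ?thesis by simp
qed

lemma sum_prob_Ehat_rival_mass_le:
  "(\<Sum>B\<in>{B\<in>Pow E. e \<in> B}. prob {\<omega>\<in>space M. Ehat \<omega> = B} * rival_mass B) \<le> 2 * x e"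
proof -
  let ?S = "\<lambda>f. {B\<in>Pow E. e \<in> B \<and> f \<in> B}"
  let ?P = "\<lambda>B. prob {\<omega>\<in>space M. Ehat \<omega> = B}"
  have "?P B * rival_mass B = (\<Sum>f\<in>rivals. p f * (if f \<in> B then ?P B else 0))" for B
    unfolding rival_mass_def using finite_rivals
    by (auto simp: sum.inter_restrict sum_distrib_left intro!: sum.cong)
  then have "(\<Sum>B\<in>{B\<in>Pow E. e \<in> B}. ?P B * rival_mass B)
      = (\<Sum>B\<in>{B\<in>Pow E. e \<in> B}. \<Sum>f\<in>rivals. p f * (if f \<in> B then ?P B else 0))"
    by simp
  also have "\<dots> = (\<Sum>f\<in>rivals. p f * (\<Sum>B\<in>?S f. ?P B))"
  proof (subst sum.swap, rule sum.cong[OF refl])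
    fix f
    have "?S f = {B\<in>{B\<in>Pow E. e \<in> B}. f \<in> B}" by auto
    moreover have "finite {B\<in>Pow E. e \<in> B}" using finite_E by simp
    ultimately have "(\<Sum>B\<in>?S f. ?P B) = (\<Sum>B\<in>{B\<in>Pow E. e \<in> B}. if f \<in> B then ?P B else 0)"
      by (simp only: sum.inter_filter)
    then show "(\<Sum>B\<in>{B\<in>Pow E. e \<in> B}. p f * (if f \<in> B then ?P B else 0)) = p f * (\<Sum>B\<in>?S f. ?P B)"
      by (simp only: sum_distrib_left)
  qed
  also have "\<dots> = (\<Sum>f\<in>rivals. p f * prob {\<omega>\<in>space M. e \<in> Ehat \<omega> \<and> f \<in> Ehat \<omega>})"
    using prob_Ehat_eq_sum[of "\<lambda>B. e \<in> B \<and> _ \<in> B"] by simp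
  also have "\<dots> \<le> (\<Sum>f\<in>rivals. p f * (x e * x f))"
    using prob_pair_le p_range rivals_subset by (intro sum_mono mult_left_mono) (auto simp: less_imp_le)
  also have "\<dots> = x e * (\<Sum>f\<in>rivals. p f * x f)"
    by (simp add: sum_distrib_left algebra_simps)
  also have "\<dots> \<le> x e * 2"
    using sum_p_x_rivals_le x_nonneg[OF eE] by (rule mult_left_mono)
  finally show ?thesis by simp
qed

definition beat_event :: "'w set" where
  "beat_event = {\<omega>\<in>space M. e \<in> Ehat \<omega> \<and> (\<forall>f\<in>rivals \<inter> Ehat \<omega>. X f \<omega> \<longrightarrow> Y e \<omega> < Y f \<omega>)}"

lemma prob_beat_event:
  "prob beat_event = (\<Sum>B\<in>{B\<in>Pow E. e \<in> B}.
     prob {\<omega>\<in>space M. Ehat \<omega> = B} * prob {\<omega>\<in>space M. ereal (Y e \<omega>) < first_rival_time B \<omega>})"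
proof -
  have "beat_event = (\<Union>B\<in>{B\<in>Pow E. e \<in> B}.
      {\<omega>\<in>space M. Ehat \<omega> = B} \<inter> {\<omega>\<in>space M. ereal (Y e \<omega>) < first_rival_time B \<omega>})"
    unfolding beat_event_def less_first_rival_time_iff using Ehat_sub by auto
  then have "prob beat_event = (\<Sum>B\<in>{B\<in>Pow E. e \<in> B}.
      prob ({\<omega>\<in>space M. Ehat \<omega> = B} \<inter> {\<omega>\<in>space M. ereal (Y e \<omega>) < first_rival_time B \<omega>}))"
    using finite_E eE by (auto intro!: measure_finite_Union simp: disjoint_family_on_def)
  also have "\<dots> = (\<Sum>B\<in>{B\<in>Pow E. e \<in> B}.
      prob {\<omega>\<in>space M. Ehat \<omega> = B} * prob {\<omega>\<in>space M. ereal (Y e \<omega>) < first_rival_time B \<omega>})"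
  proof (rule sum.cong[OF refl])
    fix B assume "B \<in> {B\<in>Pow E. e \<in> B}"
    let ?Q = "insert (SrcY e) (SrcY ` (rivals \<inter> B) \<union> SrcX ` (rivals \<inter> B))"
    note [measurable] = Ehat_measurable_sigma_sources[OF singletonI]
      Y_measurable_sigma_sources[of e ?Q, OF insertI1]
      first_rival_time_measurable_sigma_sources[of B ?Q, OF subset_insertI]
    have "{\<omega>\<in>space M. Ehat \<omega> = B} \<in> sets (sigma_sources {SrcE})"
      "{\<omega>\<in>space M. ereal (Y e \<omega>) < first_rival_time B \<omega>} \<in> sets (sigma_sources ?Q)"
      by (intro sets_Collect_sigma_sources; measurable)+
    then show "prob ({\<omega>\<in>space M. Ehat \<omega> = B} \<inter> {\<omega>\<in>space M. ereal (Y e \<omega>) < first_rival_time B \<omega>})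
      = prob {\<omega>\<in>space M. Ehat \<omega> = B} * prob {\<omega>\<in>space M. ereal (Y e \<omega>) < first_rival_time B \<omega>}"
      using \<open>B \<in> _\<close> rivals_subset eE by (intro prob_Int_sigma_sources) (auto simp: sources_def)
  qed
  finally show ?thesis .
qed

lemma exp_moment_le_prob_beat_event: "exp_moment * x e \<le> prob beat_event"
proof -
  let ?P = "\<lambda>B. prob {\<omega>\<in>space M. Ehat \<omega> = B}"
  have "exp_moment * x e
      \<le> (exp_moment + 2 * texp_moment) * x e - texp_moment * (\<Sum>B\<in>{B\<in>Pow E. e \<in> B}. ?P B * rival_mass B)"
    using mult_left_mono[OF sum_prob_Ehat_rival_mass_le texp_moment_nonneg] by (simp add: algebra_simps)
  also have "\<dots> = (\<Sum>B\<in>{B\<in>Pow E. e \<in> B}. ?P B * (exp_moment + (2 - rival_mass B) * texp_moment))"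
    by (simp add: sum_prob_Ehat_eq[symmetric] sum_distrib_left sum_subtractf algebra_simps)
  also have "\<dots> \<le> prob beat_event"
    unfolding prob_beat_event by (intro sum_mono mult_left_mono tangent_le_prob_beat) auto
  finally show ?thesis .
qed

subsection \<open>Beating the rivals implies safety\<close>

definition safe_event :: "'w set" where
  "safe_event = {\<omega>\<in>space M. safe E (Ehat \<omega>) (\<lambda>f. Y f \<omega>) r (\<lambda>f. X f \<omega>) e}"

lemma beat_event_subset_safe_event: "beat_event \<subseteq> safe_event"
  unfolding beat_event_def safe_event_def rivals_def
  using Ehat_sub finite_Ehat r_inj by (auto intro!: safe_if_first intro: inj_on_subset)

text \<open>Whether e is safe is a function of these finitely many data, hence an event.\<close>

definition outcome_data :: "'w \<Rightarrow> 'v set set \<times> ('v set \<times> 'v set) set \<times> 'v set set" where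
  "outcome_data \<omega> = (Ehat \<omega>, {(f, f')\<in>E \<times> E. Y f \<omega> \<le> Y f' \<omega>}, {f\<in>E. X f \<omega>})"

lemma outcome_data_event: "{\<omega>\<in>space M. outcome_data \<omega> = c} \<in> events"
proof -
  obtain a b d where c: "c = (a, b, d)" by (cases c) auto
  have Y_order: "{\<omega>\<in>space M. \<forall>(f, f')\<in>E \<times> E. ((f, f') \<in> b) = (Y f \<omega> \<le> Y f' \<omega>)} \<in> events"
  proof (rule sets.sets_Collect_finite_All)
    fix ff' assume "ff' \<in> E \<times> E"
    then obtain f f' where "ff' = (f, f')" "f \<in> E" "f' \<in> E" by auto
    then show "{\<omega>\<in>space M. case ff' of (f, f') \<Rightarrow> ((f, f') \<in> b) = (Y f \<omega> \<le> Y f' \<omega>)} \<in> events"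
      by (cases "(f, f') \<in> b") simp_all
  qed (use finite_E in auto)
  have X_set: "{\<omega>\<in>space M. \<forall>f\<in>E. (f \<in> d) = X f \<omega>} \<in> events"
  proof (rule sets.sets_Collect_finite_All)
    fix f assume "f \<in> E"
    then show "{\<omega>\<in>space M. (f \<in> d) = X f \<omega>} \<in> events"
      by (cases "f \<in> d") simp_all
  qed (use finite_E in auto)
  have "{\<omega>\<in>space M. outcome_data \<omega> = c} = (if b \<subseteq> E \<times> E \<and> d \<subseteq> E then {\<omega>\<in>space M. Ehat \<omega> = a}
      \<inter> {\<omega>\<in>space M. \<forall>(f, f')\<in>E \<times> E. ((f, f') \<in> b) = (Y f \<omega> \<le> Y f' \<omega>)}
      \<inter> {\<omega>\<in>space M. \<forall>f\<in>E. (f \<in> d) = X f \<omega>} else {})"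
    unfolding outcome_data_def c by auto
  also have "\<dots> \<in> events" using Y_order X_set by auto
  finally show ?thesis .
qed

lemma safe_event_eq_outcome_data:
  assumes "\<omega> \<in> space M" "\<omega>' \<in> space M" "outcome_data \<omega> = outcome_data \<omega>'"
  shows "\<omega> \<in> safe_event \<longleftrightarrow> \<omega>' \<in> safe_event"
proof -
  have Ehat: "Ehat \<omega> = Ehat \<omega>'"
    and Y: "{(f, f')\<in>E \<times> E. Y f \<omega> \<le> Y f' \<omega>} = {(f, f')\<in>E \<times> E. Y f \<omega>' \<le> Y f' \<omega>'}"
    and X: "{f\<in>E. X f \<omega>} = {f\<in>E. X f \<omega>'}"
    using assms(3) unfolding outcome_data_def by auto
  have "safe E (Ehat \<omega>) (\<lambda>f. Y f \<omega>) r (\<lambda>f. X f \<omega>) e = safe E (Ehat \<omega>) (\<lambda>f. Y f \<omega>') r (\<lambda>f. X f \<omega>') e"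
  proof (rule safe_cong)
    fix f f' assume "f \<in> E" "f' \<in> E"
    then show "(Y f \<omega> \<le> Y f' \<omega>) = (Y f \<omega>' \<le> Y f' \<omega>')" using Y by (auto simp: set_eq_iff)
  qed (use finite_Ehat Ehat_sub r_inj X assms(1) in \<open>auto simp: set_eq_iff intro: inj_on_subset\<close>)
  then show ?thesis using assms Ehat unfolding safe_event_def by auto
qed

lemma safe_event_in_events: "safe_event \<in> events"
proof -
  have eq: "safe_event = (\<Union>c\<in>outcome_data ` safe_event. {\<omega>\<in>space M. outcome_data \<omega> = c})"
    using safe_event_eq_outcome_data by (auto simp: safe_event_def)
  have "outcome_data ` safe_event \<subseteq> Pow E \<times> Pow (E \<times> E) \<times> Pow E"
    using Ehat_sub unfolding outcome_data_def safe_event_def by auto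
  moreover have "finite (Pow E \<times> Pow (E \<times> E) \<times> Pow E)" using finite_E by simp
  ultimately have "finite (outcome_data ` safe_event)" by (rule finite_subset)
  then have "(\<Union>c\<in>outcome_data ` safe_event. {\<omega>\<in>space M. outcome_data \<omega> = c}) \<in> events"
    using outcome_data_event by (intro sets.finite_UN) auto
  then show ?thesis by (simp only: eq[symmetric])
qed

subsection \<open>Computing the moment\<close>

lemma trunc_exp_cdf_le_prob:
  assumes "f \<in> E"
  shows "trunc_exp_cdf (p f) s \<le> prob {\<omega>\<in>space M. Y f \<omega> \<le> s}"
proof (cases "s < 0 \<or> p f = 1 \<or> s \<le> y_max (p f)")
  case True
  then show ?thesis using prob_Y_le assms by (auto simp: trunc_exp_cdf_def)
next
  case False
  have pf: "0 < p f" "p f < 1" using p_range assms False by auto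
  have "0 \<le> y_max (p f)" using one_le_y_max[OF pf] by simp
  then have "prob {\<omega>\<in>space M. Y f \<omega> \<le> y_max (p f)} = (1 / p f) * (1 - exp (- p f * y_max (p f)))"
    using prob_Y_le assms by simp
  then have "1 = prob {\<omega>\<in>space M. Y f \<omega> \<le> y_max (p f)}"
    using pf exp_neg_y_max[OF pf] by simp
  also have "\<dots> \<le> prob {\<omega>\<in>space M. Y f \<omega> \<le> s}"
    using False assms by (intro finite_measure_mono) auto
  finally show ?thesis using False by (simp add: trunc_exp_cdf_def)
qed

lemma g_le_exp_moment: "g (p e) \<le> exp_moment"
proof -
  have pe: "0 < p e" "p e \<le> 1" using p_range eE by auto
  have "ennreal (g (p e)) = (\<integral>\<^sup>+s. ennreal (2 * exp (-2 * s) * trunc_exp_cdf (p e) s) \<partial>lborel)"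
    using g_eq_integral[OF pe] by simp
  also have "\<dots> \<le> (\<integral>\<^sup>+s. ennreal (2 * exp (-2 * s)) * emeasure M {\<omega>\<in>space M. Te \<omega> \<le> s} \<partial>lborel)"
  proof (intro nn_integral_mono)
    fix s :: real
    have "trunc_exp_cdf (p e) s \<le> prob {\<omega>\<in>space M. Te \<omega> \<le> s}"
    proof (cases "s < 0")
      case False
      have "{\<omega>\<in>space M. Te \<omega> \<le> s} \<in> events" by measurable
      then have "prob {\<omega>\<in>space M. Y e \<omega> \<le> s} \<le> prob {\<omega>\<in>space M. Te \<omega> \<le> s}"
        using False by (intro finite_measure_mono) (auto simp: Te_def)
      then show ?thesis using trunc_exp_cdf_le_prob[OF eE] by (rule order_trans[rotated])
    qed (simp add: trunc_exp_cdf_def)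
    then show "ennreal (2 * exp (-2 * s) * trunc_exp_cdf (p e) s)
        \<le> ennreal (2 * exp (-2 * s)) * emeasure M {\<omega>\<in>space M. Te \<omega> \<le> s}"
      using trunc_exp_cdf_nonneg[OF pe(1)]
      by (simp add: ennreal_mult emeasure_eq_measure mult_left_mono)
  qed
  also have "\<dots> = (\<integral>\<^sup>+\<omega>. ennreal (exp (-2 * Te \<omega>)) \<partial>M)"
    using nn_integral_exp_neg_eq[of 2 Te] by simp
  also have "\<dots> = ennreal exp_moment"
    unfolding exp_moment_def using integrable_exp_Te[of 2]
    by (intro nn_integral_eq_integral) (auto simp: mult.commute)
  finally show ?thesis
    using integral_nonneg_AE[of "\<lambda>\<omega>. exp (-2 * Te \<omega>)" M] by (simp add: exp_moment_def ennreal_le_iff)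
qed

end

theorem lemma2:
  fixes V :: "'v set" and E :: "'v set set"
    and p x :: "'v set \<Rightarrow> real" and t :: "'v \<Rightarrow> nat"
    and M :: "'w measure"
    and Ehat :: "'w \<Rightarrow> 'v set set"
    and Y :: "'v set \<Rightarrow> 'w \<Rightarrow> real"
    and X :: "'v set \<Rightarrow> 'w \<Rightarrow> bool"
    and r :: "'v set \<Rightarrow> nat"
    and e :: "'v set"
  assumes bip: "bipartite_graph V E"
    and p_range: "\<forall>f\<in>E. 0 < p f \<and> p f \<le> 1"
    and feas: "lp_bip_feasible V E p t x"
    and M: "prob_space M"
    and Ehat_meas: "Ehat \<in> measurable M (count_space UNIV)"
    and Ehat_sub: "\<forall>\<omega>\<in>space M. Ehat \<omega> \<subseteq> E"
    and marg: "\<forall>f\<in>E. measure M {\<omega> \<in> space M. f \<in> Ehat \<omega>} = x f"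
    and negcor: "\<forall>v\<in>V. \<forall>S\<subseteq>delta_v E v. \<forall>b::bool.
        measure M {\<omega> \<in> space M. \<forall>f\<in>S. (f \<in> Ehat \<omega>) = b}
          \<le> (\<Prod>f\<in>S. measure M {\<omega> \<in> space M. (f \<in> Ehat \<omega>) = b})"
    and Y_meas: "\<forall>f\<in>E. Y f \<in> borel_measurable M"
    and Y_range: "\<forall>f\<in>E. AE \<omega> in M. 0 \<le> Y f \<omega> \<and>
        (p f = 1 \<or> Y f \<omega> \<le> (1 / p f) * ln (1 / (1 - p f)))"
    and Y_cdf: "\<forall>f\<in>E. \<forall>y. 0 \<le> y \<and> (p f = 1 \<or> y \<le> (1 / p f) * ln (1 / (1 - p f))) \<longrightarrow>
        measure M {\<omega> \<in> space M. Y f \<omega> \<le> y} = (1 / p f) * (1 - exp (- p f * y))"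
    and X_meas: "\<forall>f\<in>E. X f \<in> measurable M (count_space UNIV)"
    and X_prob: "\<forall>f\<in>E. measure M {\<omega> \<in> space M. X f \<omega>} = p f"
    and indep: "prob_space.indep_sets M
        (\<lambda>i. case i of
            SrcE \<Rightarrow> {Ehat -` A \<inter> space M | A. A \<in> sets (count_space UNIV)}
          | SrcY f \<Rightarrow> {Y f -` A \<inter> space M | A. A \<in> sets borel}
          | SrcX f \<Rightarrow> {X f -` A \<inter> space M | A. A \<in> sets (count_space UNIV)})
        ({SrcE} \<union> SrcY ` E \<union> SrcX ` E)"
    and r_inj: "inj_on r E"
    and eE: "e \<in> E"
  shows "measure M {\<omega> \<in> space M. safe E (Ehat \<omega>) (\<lambda>f. Y f \<omega>) r (\<lambda>f. X f \<omega>) e}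
           \<ge> g (p e) * measure M {\<omega> \<in> space M. e \<in> Ehat \<omega>}"
proof -
  interpret probing_setting V E p x t M Ehat Y X r e
    by (rule probing_setting.intro[OF assms])
  have "g (p e) * measure M {\<omega> \<in> space M. e \<in> Ehat \<omega>} = g (p e) * x e"
    using marg eE by simp
  also have "\<dots> \<le> exp_moment * x e"
    using g_le_exp_moment x_nonneg[OF eE] by (rule mult_right_mono)
  also have "\<dots> \<le> prob beat_event"
    by (rule exp_moment_le_prob_beat_event)
  also have "\<dots> \<le> prob safe_event"
    using beat_event_subset_safe_event safe_event_in_events by (rule finite_measure_mono)
  finally show ?thesis unfolding safe_event_def .
qed

end
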